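(* Consider the draining problem described in the context. For any optimal trajectory $(s^\ast,R^\ast)$ with optimal control $u^\ast$ and optimal cost $T^\ast$, there exists a unique time $t^0$ such that $\|s^\ast(t^0)-x\|=\delta$ and $R^\ast(t^0)=0$, where $\delta=\sqrt{r^2(B-A)/B}$. Moreover, $$u^\ast(t)=\frac{s^\psi-s^\ast(t^0)}{\|s^\psi-s^\ast(t^0)\|}\quad\text{for every }t\in[t^0,T^\ast].$$
   Context: $\|\cdot\|$ is the Euclidean norm. A single target sits at the fixed position $x\in\mathbb{R}^2$, with sensing range $r>0$ and constants $A,B$ with $B>A$ (uncertainty accumulation rate $A$). The agent has position $s(t)\in\mathbb{R}^2$ with dynamics $\dot s(t)=u(t)$ and control constraint $\|u(t)\|\le 1$. Define $p(s)=\max\{0,\,1-\|s-x\|^2/r^2\}$ and $f_R(R,s)=0$ if $R=0$ and $A-Bp(s)<0$, and $f_R(R,s)=A-Bp(s)$ otherwise. The entrance point $s^\varphi$ and departure point $s^\psi$ are the points where the agent starts, respectively stops, sensing the target, and $\check R$ is the uncertainty at arrival. The draining problem is: minimize $T$ over $T$ and controls $u:[0,T]\to\mathbb{R}^2$ subject to $\dot s=u$, $\dot R=f_R(R,s)$, $\|u(t)\|^2\le1$, $\min_{\tau\in[0,T]}R(\tau)=0$, $s(0)=s^\varphi$, $s(T)=s^\psi$, $R(0)=\check R$. *)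

theory Defs
  imports "HOL-Analysis.Analysis"
begin

definition sense_prob :: "real \<Rightarrow> real^2 \<Rightarrow> real^2 \<Rightarrow> real" where
  "sense_prob r x s = max 0 (1 - (norm (s - x))^2 / r^2)"

definition f_R :: "real \<Rightarrow> real \<Rightarrow> real \<Rightarrow> real^2 \<Rightarrow> real \<Rightarrow> real^2 \<Rightarrow> real" where
  "f_R A B r x R s =
     (if R = 0 \<and> A - B * sense_prob r x s < 0 then 0 else A - B * sense_prob r x s)"

text \<open>Feasible (T,u,s,R) for the draining problem. The ODEs are understood in the
  integral (Caratheodory) sense, controls being integrable functions on [0,T].\<close>
definition draining_feasible ::
  "real \<Rightarrow> real \<Rightarrow> real \<Rightarrow> real^2 \<Rightarrow> real^2 \<Rightarrow> real^2 \<Rightarrow> real \<Rightarrow>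
   real \<Rightarrow> (real \<Rightarrow> real^2) \<Rightarrow> (real \<Rightarrow> real^2) \<Rightarrow> (real \<Rightarrow> real) \<Rightarrow> bool" where
  "draining_feasible A B r x sphi spsi Rc T u s R \<longleftrightarrow>
     0 \<le> T
   \<and> u integrable_on {0..T}
   \<and> (\<forall>t\<in>{0..T}. (norm (u t))^2 \<le> 1)
   \<and> (\<forall>t\<in>{0..T}. s t = sphi + integral {0..t} u)
   \<and> (\<lambda>t. f_R A B r x (R t) (s t)) integrable_on {0..T}
   \<and> (\<forall>t\<in>{0..T}. R t = Rc + integral {0..t} (\<lambda>\<tau>. f_R A B r x (R \<tau>) (s \<tau>)))
   \<and> (INF \<tau>\<in>{0..T}. R \<tau>) = 0
   \<and> s 0 = sphi \<and> s T = spsi \<and> R 0 = Rc"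

definition draining_optimal ::
  "real \<Rightarrow> real \<Rightarrow> real \<Rightarrow> real^2 \<Rightarrow> real^2 \<Rightarrow> real^2 \<Rightarrow> real \<Rightarrow>
   real \<Rightarrow> (real \<Rightarrow> real^2) \<Rightarrow> (real \<Rightarrow> real^2) \<Rightarrow> (real \<Rightarrow> real) \<Rightarrow> bool" where
  "draining_optimal A B r x sphi spsi Rc T u s R \<longleftrightarrow>
     draining_feasible A B r x sphi spsi Rc T u s R
   \<and> (\<forall>T' u' s' R'. draining_feasible A B r x sphi spsi Rc T' u' s' R' \<longrightarrow> T \<le> T')"

end

theory Submission
  imports Defs
begin

text \<open>The unclipped rate A - B p(y) is nonpositive exactly
  on the closed disc of radius \<delta> < r about x, so R can only decrease there. Let t1 be the first
  zero of R; then s(t1) lies in that disc. Leaving the trajectory at any time a and heading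
  straight for s\<psi> at unit speed is feasible as soon as the uncertainty vanishes on the way, so
  T \<le> a + |s\<psi> - s(a)|; together with the speed bound this forces the optimal trajectory to be the
  unit-speed segment from s(t1) to s\<psi>. Along it |s(t) - x|^2 is a convex quadratic, which
  meets \<delta>^2 exactly once provided s(t1) is strictly inside the disc or on its boundary moving
  outward. The inward case is excluded by cutting the corner: leaving slightly before t1, the
  chord to s\<psi> still drains the target while it approaches x, and is strictly shorter.\<close>

lemma has_integral_splice:
  fixes f g :: "real \<Rightarrow> 'a::banach"
  assumes "(f has_integral I) {a..b}" "(g has_integral J) {b..c}" "a \<le> b" "b \<le> c"
  shows "((\<lambda>t. if t \<le> b then f t else g t) has_integral (I + J)) {a..c}"
proof (rule has_integral_combine[OF assms(3,4)])
  show "((\<lambda>t. if t \<le> b then f t else g t) has_integral I) {a..b}"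
    by (rule has_integral_eq[OF _ assms(1)]) simp
  show "((\<lambda>t. if t \<le> b then f t else g t) has_integral J) {b..c}"
    by (rule has_integral_spike_finite[of "{b}", OF _ _ assms(2)]) auto
qed

lemma has_integral_if_splice:
  fixes f g :: "real \<Rightarrow> 'a::banach"
  assumes "0 \<le> a" "0 \<le> t"
    and f: "\<forall>\<tau>\<in>{0..a}. (f has_integral (F \<tau> - c)) {0..\<tau>}"
    and g: "\<forall>\<tau>\<ge>a. (g has_integral (G \<tau> - F a)) {a..\<tau>}"
  shows "((\<lambda>\<tau>. if \<tau> \<le> a then f \<tau> else g \<tau>) has_integral ((if t \<le> a then F t else G t) - c)) {0..t}"
proof (cases "t \<le> a")
  case True
  with f \<open>0 \<le> t\<close> have "(f has_integral ((if t \<le> a then F t else G t) - c)) {0..t}" by simp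
  then show ?thesis by (rule has_integral_eq[rotated]) (use True in auto)
next
  case False
  from has_integral_splice[OF f[rule_format, of a] g[rule_format, of t]] False \<open>0 \<le> a\<close>
  show ?thesis by simp
qed

lemma continuous_on_first_zero:
  fixes F :: "real \<Rightarrow> real"
  assumes cF: "continuous_on {a..b} F" and Fa: "0 < F a" and t: "t \<in> {a..b}" "F t \<le> 0"
  obtains g where "a < g" "g \<le> b" "F g = 0" "\<forall>\<tau>\<in>{a..<g}. 0 < F \<tau>"
proof -
  define Z where "Z = {t \<in> {a..b}. F t = 0}"
  have below: "\<exists>z\<in>Z. z \<le> t" if "t \<in> {a..b}" "F t \<le> 0" for t
  proof -
    have "\<exists>z\<ge>a. z \<le> t \<and> F z = 0"
      using IVT2'[of F t 0 a] that Fa continuous_on_subset[OF cF, of "{a..t}"] by auto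
    then show ?thesis using that unfolding Z_def by auto
  qed
  have "Z \<noteq> {}" using below[OF t] by auto
  moreover have "closed Z"
    unfolding Z_def using continuous_closed_preimage_constant[OF cF] by simp
  moreover have bdd: "bdd_below Z" unfolding Z_def by (rule bdd_belowI[of _ a]) auto
  ultimately have gZ: "Inf Z \<in> Z" by (simp add: closed_contains_Inf)
  have pos: "\<forall>\<tau>\<in>{a..<Inf Z}. 0 < F \<tau>"
  proof (rule ballI, rule ccontr)
    fix \<tau> assume \<tau>: "\<tau> \<in> {a..<Inf Z}" and "\<not> 0 < F \<tau>"
    moreover have "\<tau> \<in> {a..b}" using \<tau> gZ unfolding Z_def by auto
    ultimately obtain z where "z \<in> Z" "z \<le> \<tau>" using below by force
    then show False using cInf_lower[OF _ bdd] \<tau> by fastforce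
  qed
  have "a \<le> Inf Z" "Inf Z \<le> b" "F (Inf Z) = 0" using gZ unfolding Z_def by auto
  moreover have "a \<noteq> Inf Z" using Fa calculation(3) by auto
  ultimately show ?thesis using that pos by force
qed

lemma continuous_on_neg_before:
  fixes f :: "real \<Rightarrow> real"
  assumes "continuous_on {b..t} f" "b < t" "f t < 0"
  obtains a where "b \<le> a" "a < t" "f a < 0"
proof -
  obtain d where d: "0 < d" "\<forall>a\<in>{b..t}. dist a t < d \<longrightarrow> dist (f a) (f t) < - f t"
    using assms(1)[unfolded continuous_on_iff, rule_format, of t "- f t"] assms(2,3) by auto
  define a where "a = max b (t - d / 2)"
  have "b \<le> a" "a < t" "dist a t < d" using d assms unfolding a_def dist_real_def by auto
  moreover have "f a < 0" using d(2) calculation by (auto simp: dist_real_def)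
  ultimately show ?thesis using that by blast
qed

lemma affine_line_in_cball_between:
  fixes p v x :: "'a::real_normed_vector"
  assumes "g \<le> \<sigma>" "\<sigma> \<le> \<tau>" "norm (p + (g - a) *\<^sub>R v - x) \<le> d" "norm (p + (\<tau> - a) *\<^sub>R v - x) \<le> d"
  shows "norm (p + (\<sigma> - a) *\<^sub>R v - x) \<le> d"
proof (cases "g = \<tau>")
  case True
  then show ?thesis using assms by (metis order_antisym)
next
  case False
  define \<mu> where "\<mu> = (\<sigma> - g) / (\<tau> - g)"
  have \<mu>: "0 \<le> \<mu>" "\<mu> \<le> 1" "\<sigma> = g + \<mu> * (\<tau> - g)"
    using assms False unfolding \<mu>_def by (auto simp: field_simps)
  have "p + (\<sigma> - a) *\<^sub>R v = (1 - \<mu>) *\<^sub>R (p + (g - a) *\<^sub>R v) + \<mu> *\<^sub>R (p + (\<tau> - a) *\<^sub>R v)"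
    unfolding \<mu>(3) by (simp add: algebra_simps)
  moreover have "p + (g - a) *\<^sub>R v \<in> cball x d" "p + (\<tau> - a) *\<^sub>R v \<in> cball x d"
    using assms by (simp_all add: dist_norm norm_minus_commute)
  ultimately have "p + (\<sigma> - a) *\<^sub>R v \<in> cball x d"
    using convexD[OF convex_cball, of _ x d _ "1 - \<mu>" \<mu>] \<mu> by simp
  then show ?thesis by (simp add: dist_norm norm_minus_commute)
qed

lemma endpoint_in_cball_if_integrals_neg:
  fixes y :: "real \<Rightarrow> 'a::real_normed_vector" and f :: "real \<Rightarrow> real"
  assumes "a < g" and cy: "continuous_on {a..g} y" and fint: "f integrable_on {a..g}"
    and neg: "\<forall>t\<in>{a..<g}. integral {t..g} f < 0"
    and nonneg_outside: "\<forall>t\<in>{a..g}. d \<le> norm (y t - x) \<longrightarrow> 0 \<le> f t"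
  shows "norm (y g - x) \<le> d"
proof (rule ccontr)
  assume "\<not> norm (y g - x) \<le> d"
  moreover have "g \<in> {a..g}" using \<open>a < g\<close> by simp
  ultimately obtain h where h: "h > 0" "\<forall>t\<in>{a..g}. dist t g < h \<longrightarrow> dist (y t) (y g) < norm (y g - x) - d"
    using cy[unfolded continuous_on_iff, rule_format, of g "norm (y g - x) - d"] by auto
  define t where "t = max a (g - h / 2)"
  have t: "a \<le> t" "t < g" using \<open>a < g\<close> h unfolding t_def by auto
  have "0 \<le> f \<sigma>" if "\<sigma> \<in> {t..g}" for \<sigma>
  proof -
    have "\<sigma> \<in> {a..g}" "dist \<sigma> g < h" using that t h unfolding t_def dist_real_def by auto
    then have "dist (y \<sigma>) (y g) < norm (y g - x) - d" using h by blast
    moreover have "norm (y g - x) \<le> dist (y \<sigma>) (y g) + norm (y \<sigma> - x)"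
      using norm_triangle_ineq[of "y g - y \<sigma>" "y \<sigma> - x"] by (simp add: dist_norm norm_minus_commute)
    ultimately show ?thesis using nonneg_outside \<open>\<sigma> \<in> {a..g}\<close> by auto
  qed
  then have "0 \<le> integral {t..g} f"
    using integrable_subinterval_real[OF fint] t by (intro integral_nonneg) auto
  then show False using neg t by force
qed

lemma has_integral_0_nonneg_AE:
  fixes k :: "real \<Rightarrow> real"
  assumes ki: "(k has_integral 0) {a..b}" and kn: "\<And>t. t \<in> {a..b} \<Longrightarrow> 0 \<le> k t"
  shows "AE t in lebesgue. t \<in> {a..b} \<longrightarrow> k t = 0"
proof -
  define k' where "k' = (\<lambda>t. if t \<in> {a..b} then k t else 0)"
  have nn: "\<And>t. 0 \<le> k' t" using kn unfolding k'_def by auto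
  have "(k' has_integral 0) UNIV" unfolding k'_def using ki has_integral_restrict_UNIV by blast
  then have "k' \<in> borel_measurable lebesgue" "integral\<^sup>N lebesgue k' = 0"
    using has_integral_iff_nn_integral_lebesgue[of k' 0] nn by auto
  then have "AE t in lebesgue. ennreal (k' t) = 0" by (simp add: nn_integral_0_iff_AE)
  then show ?thesis by eventually_elim (use nn in \<open>auto simp: k'_def\<close>)
qed

lemma AE_eq_unit_if_integral_eq:
  fixes u :: "real \<Rightarrow> 'a::euclidean_space" and e :: 'a
  assumes "a \<le> b" and ui: "u integrable_on {a..b}" and un: "\<forall>t\<in>{a..b}. norm (u t) \<le> 1"
    and ne: "norm e = 1" and iu: "integral {a..b} u = (b - a) *\<^sub>R e"
  shows "AE t in lebesgue. t \<in> {a..b} \<longrightarrow> u t = e"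
proof -
  have "inner e e = 1" using ne by (simp add: norm_eq_1)
  then have ie: "((\<lambda>t. inner e (u t)) has_integral (b - a)) {a..b}"
    using has_integral_linear[OF integrable_integral[OF ui] bounded_linear_inner_right[of e]] iu
    by (simp add: o_def)
  have "((\<lambda>t. 1::real) has_integral (b - a)) {a..b}"
    using has_integral_const_real[of "1::real" a b] \<open>a \<le> b\<close> by simp
  from has_integral_diff[OF this ie]
  have "((\<lambda>t. 1 - inner e (u t)) has_integral 0) {a..b}" by simp
  moreover have "0 \<le> 1 - inner e (u t)" if "t \<in> {a..b}" for t
  proof -
    have "inner e (u t) \<le> norm e * norm (u t)" by (rule norm_cauchy_schwarz)
    then show ?thesis using ne un that by force
  qed
  ultimately have "AE t in lebesgue. t \<in> {a..b} \<longrightarrow> 1 - inner e (u t) = 0"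
    by (rule has_integral_0_nonneg_AE)
  then show ?thesis
  proof eventually_elim
    case (elim t)
    show ?case
    proof
      assume t: "t \<in> {a..b}"
      have "(norm (u t - e))^2 = (norm (u t))^2 - 2 * inner e (u t) + (norm e)^2"
        by (simp add: power2_norm_eq_inner inner_diff_left inner_diff_right inner_commute)
      moreover have "(norm (u t))^2 \<le> 1" using un t by (simp add: abs_square_le_1)
      ultimately have "(norm (u t - e))^2 \<le> 0" using elim t ne by simp
      then show "u t = e" by simp
    qed
  qed
qed

lemma norm_add_scaleR_unit_power2:
  fixes v e :: "'a::real_inner"
  assumes "norm e = 1"
  shows "(norm (v + t *\<^sub>R e))^2 = (norm v)^2 + 2 * t * inner v e + t^2"
proof -
  have "(norm (v + t *\<^sub>R e))^2 = inner (v + t *\<^sub>R e) (v + t *\<^sub>R e)"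
    by (rule power2_norm_eq_inner)
  also have "\<dots> = inner v v + 2 * t * inner v e + t^2 * inner e e"
    by (simp add: inner_add_left inner_add_right inner_commute power2_eq_square algebra_simps)
  finally show ?thesis using assms by (simp add: power2_norm_eq_inner[symmetric])
qed

lemma eq_along_unit_if_dist_sum_le:
  fixes p y e :: "'a::real_inner"
  assumes e: "norm e = 1" and m: "norm (y - p) \<le> m" and n: "norm (p + l *\<^sub>R e - y) \<le> n"
    and mnl: "m + n \<le> l"
  shows "y = p + m *\<^sub>R e"
proof -
  define w where "w = y - p"
  have "0 \<le> l" using m n mnl by (meson add_nonneg_nonneg norm_ge_zero order_trans)
  then have "l = norm (w + (l *\<^sub>R e - w))" using e by simp
  also have "\<dots> \<le> norm w + norm (l *\<^sub>R e - w)" by (rule norm_triangle_ineq)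
  finally have "norm w = m" "norm (l *\<^sub>R e - w) = l - m"
    using m n mnl unfolding w_def by (auto simp: algebra_simps)
  then have "norm (w + (l *\<^sub>R e - w)) = norm w + norm (l *\<^sub>R e - w)"
    using e \<open>0 \<le> l\<close> by simp
  then have "m *\<^sub>R (l *\<^sub>R e - w) = (l - m) *\<^sub>R w"
    unfolding norm_triangle_eq using \<open>norm w = m\<close> \<open>norm (l *\<^sub>R e - w) = l - m\<close> by simp
  then have "l *\<^sub>R (m *\<^sub>R e - w) = 0" by (simp add: algebra_simps)
  moreover have "l = 0 \<Longrightarrow> w = 0"
    using \<open>norm w = m\<close> mnl order_trans[OF norm_ge_zero n] by (smt (verit) norm_le_zero_iff)
  ultimately show ?thesis using \<open>norm w = m\<close> unfolding w_def by auto
qed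

lemma neg_inner_sgn_le_norm_diff:
  fixes p q x :: "'a::real_inner"
  assumes "norm (q - x) \<le> norm (p - x)"
  shows "- inner (q - x) (sgn (p - q)) \<le> norm (p - q)"
proof (cases "p = q")
  case False
  define l c where "l = norm (p - q)" and "c = inner (q - x) (sgn (p - q))"
  have eq: "p - x = (q - x) + l *\<^sub>R sgn (p - q)" using False unfolding l_def by (simp add: sgn_div_norm)
  have "norm (sgn (p - q)) = 1" using False by (simp add: norm_sgn)
  then have "(norm (p - x))^2 = (norm (q - x))^2 + 2 * l * c + l^2"
    unfolding eq c_def by (rule norm_add_scaleR_unit_power2)
  moreover have "(norm (q - x))^2 \<le> (norm (p - x))^2" using assms by (simp add: power_mono)
  ultimately have "0 \<le> l * (l + 2 * c)" by (simp add: power2_eq_square algebra_simps)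
  moreover have "0 < l" using False unfolding l_def by simp
  ultimately show ?thesis unfolding l_def c_def by (smt (verit) zero_le_mult_iff)
qed simp

lemma quadratic_nonneg_roots_eq:
  fixes b D \<tau> \<tau>' :: real
  assumes "0 \<le> \<tau>" "0 \<le> \<tau>'" "\<tau>^2 + 2 * b * \<tau> = D" "\<tau>'^2 + 2 * b * \<tau>' = D"
    and "0 \<le> D" and "D = 0 \<Longrightarrow> 0 \<le> b"
  shows "\<tau> = \<tau>'"
proof (rule ccontr)
  assume "\<tau> \<noteq> \<tau>'"
  moreover have "(\<tau> - \<tau>') * (\<tau> + \<tau>' + 2 * b) = 0"
    using assms(3,4) by (simp add: algebra_simps power2_eq_square)
  ultimately have sum: "\<tau> + \<tau>' = - 2 * b" by simp
  then have "\<tau> * \<tau>' = \<tau> * (- 2 * b - \<tau>)" by (metis add_diff_cancel_left')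
  also have "\<dots> = - (\<tau>^2 + 2 * b * \<tau>)" by (simp add: algebra_simps power2_eq_square)
  finally have "\<tau> * \<tau>' = - D" using assms(3) by simp
  then have "D = 0" using assms(1,2,5) by (smt (verit) mult_nonneg_nonneg)
  then show False using sum assms(1,2,6) \<open>\<tau> \<noteq> \<tau>'\<close> by simp
qed

definition drain_radius :: "real \<Rightarrow> real \<Rightarrow> real \<Rightarrow> real" where
  "drain_radius r A B = sqrt (r^2 * (B - A) / B)"

definition uncertainty_rate :: "real \<Rightarrow> real \<Rightarrow> real \<Rightarrow> real^2 \<Rightarrow> real^2 \<Rightarrow> real" where
  "uncertainty_rate A B r x y = A - B * sense_prob r x y"

lemma f_R_eq_uncertainty_rate:
  "f_R A B r x R y =
    (if R = 0 \<and> uncertainty_rate A B r x y < 0 then 0 else uncertainty_rate A B r x y)"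
  by (simp add: f_R_def uncertainty_rate_def)

lemma draining_feasibleI:
  assumes "0 \<le> T"
    and "\<forall>t\<in>{0..T}. (norm (u t))^2 \<le> 1"
    and s: "\<forall>t\<in>{0..T}. (u has_integral (s t - sphi)) {0..t}"
    and R: "\<forall>t\<in>{0..T}. ((\<lambda>\<tau>. f_R A B r x (R \<tau>) (s \<tau>)) has_integral (R t - Rc)) {0..t}"
    and R_nonneg: "\<forall>t\<in>{0..T}. 0 \<le> R t" and R_zero: "\<exists>t\<in>{0..T}. R t = 0"
    and "s T = spsi"
  shows "draining_feasible A B r x sphi spsi Rc T u s R"
proof -
  have "(INF \<tau>\<in>{0..T}. R \<tau>) = 0"
  proof (rule antisym)
    show "(INF \<tau>\<in>{0..T}. R \<tau>) \<le> 0"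
      using R_zero R_nonneg by (metis bdd_belowI2 cINF_lower)
    show "0 \<le> (INF \<tau>\<in>{0..T}. R \<tau>)"
      using R_zero R_nonneg by (intro cINF_greatest) auto
  qed
  moreover have "s t = sphi + integral {0..t} u" "R t = Rc + integral {0..t} (\<lambda>\<tau>. f_R A B r x (R \<tau>) (s \<tau>))"
    if "t \<in> {0..T}" for t
    using integral_unique[OF s[rule_format, OF that]] integral_unique[OF R[rule_format, OF that]] by simp_all
  moreover have "u integrable_on {0..T}" "(\<lambda>\<tau>. f_R A B r x (R \<tau>) (s \<tau>)) integrable_on {0..T}"
    using s R \<open>0 \<le> T\<close> by auto
  ultimately show ?thesis
    using assms unfolding draining_feasible_def by auto
qed

locale drain_target =
  fixes A B r :: real and x :: "real^2"
  assumes r_pos: "0 < r" and A_pos: "0 < A" and A_less_B: "A < B"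
begin

abbreviation \<delta> where "\<delta> \<equiv> drain_radius r A B"
abbreviation rate where "rate \<equiv> uncertainty_rate A B r x"

lemma drain_radius_power2: "\<delta>^2 = r^2 * (B - A) / B"
  and drain_radius_pos: "0 < \<delta>" and drain_radius_less: "\<delta> < r"
proof -
  have "0 < r^2 * (B - A) / B" using r_pos A_pos A_less_B by simp
  then show "\<delta>^2 = r^2 * (B - A) / B" "0 < \<delta>" unfolding drain_radius_def by simp_all
  have "r^2 * (B - A) / B < r^2" using r_pos A_pos A_less_B by (simp add: field_simps)
  then have "sqrt (r^2 * (B - A) / B) < sqrt (r^2)" by (simp only: real_sqrt_less_iff)
  then show "\<delta> < r" unfolding drain_radius_def using r_pos by simp
qed

lemma rate_le: "rate y \<le> B / r^2 * ((norm (y - x))^2 - \<delta>^2)"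
proof -
  have "rate y \<le> A - B * (1 - (norm (y - x))^2 / r^2)"
    unfolding uncertainty_rate_def sense_prob_def using A_pos A_less_B by simp
  also have "\<dots> = B / r^2 * ((norm (y - x))^2 - \<delta>^2)"
    using r_pos A_pos A_less_B by (simp add: drain_radius_power2 field_simps)
  finally show ?thesis .
qed

lemma rate_nonpos:
  assumes "norm (y - x) \<le> \<delta>"
  shows "rate y \<le> 0"
proof -
  have "(norm (y - x))^2 \<le> \<delta>^2" using assms by (simp add: power_mono)
  then have "B * ((norm (y - x))^2 - \<delta>^2) \<le> 0"
    using A_pos A_less_B by (simp add: mult_nonneg_nonpos)
  then have "B / r^2 * ((norm (y - x))^2 - \<delta>^2) \<le> 0" using r_pos by (simp add: divide_nonpos_pos)
  then show ?thesis using rate_le[of y] by linarith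
qed

lemma rate_nonneg:
  assumes "\<delta> \<le> norm (y - x)"
  shows "0 \<le> rate y"
proof (cases "norm (y - x) \<le> r")
  case True
  have "\<delta>^2 \<le> (norm (y - x))^2" using assms drain_radius_pos by (simp add: power_mono)
  then have "B * (1 - (norm (y - x))^2 / r^2) \<le> B * (1 - \<delta>^2 / r^2)"
    using r_pos A_pos A_less_B by (simp add: divide_right_mono)
  also have "\<dots> = A" using r_pos A_pos A_less_B by (simp add: drain_radius_power2 field_simps)
  finally show ?thesis
    using A_pos unfolding uncertainty_rate_def sense_prob_def by (simp add: max_def)
next
  case False
  then have "1 \<le> (norm (y - x))^2 / r^2"
    using r_pos by (simp add: power_mono field_simps less_imp_le)
  then show ?thesis unfolding uncertainty_rate_def sense_prob_def using A_pos by simp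
qed

lemma f_R_nonneg: "\<delta> \<le> norm (y - x) \<Longrightarrow> 0 \<le> f_R A B r x R y"
  using rate_nonneg[of y] by (simp add: f_R_eq_uncertainty_rate)

lemma f_R_nonpos: "norm (y - x) \<le> \<delta> \<Longrightarrow> f_R A B r x R y \<le> 0"
  using rate_nonpos[of y] by (simp add: f_R_eq_uncertainty_rate)

lemma continuous_on_rate: "continuous_on S (\<lambda>t. rate (y t))" if "continuous_on S y"
  unfolding uncertainty_rate_def sense_prob_def using r_pos by (intro continuous_intros that) auto

lemma integral_rate_line_le:
  fixes q e :: "real^2"
  assumes e: "norm e = 1" and "0 \<le> l"
  shows "integral {a..a + l} (\<lambda>\<sigma>. rate (q + (\<sigma> - a) *\<^sub>R e))
    \<le> B / r^2 * (((norm (q - x))^2 - \<delta>^2) * l + inner (q - x) e * l^2 + l^3 / 3)"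
proof -
  define k0 c K where "k0 = (norm (q - x))^2 - \<delta>^2" and "c = inner (q - x) e" and "K = B / r^2"
  define p where "p = (\<lambda>\<sigma>. K * (k0 + 2 * c * (\<sigma> - a) + (\<sigma> - a)^2))"
  define G where "G = (\<lambda>\<sigma>. K * (k0 * (\<sigma> - a) + c * (\<sigma> - a)^2 + (\<sigma> - a)^3 / 3))"
  have "rate (q + (\<sigma> - a) *\<^sub>R e) \<le> p \<sigma>" for \<sigma>
  proof -
    have eq: "q + (\<sigma> - a) *\<^sub>R e - x = (q - x) + (\<sigma> - a) *\<^sub>R e" by simp
    have n: "(norm (q + (\<sigma> - a) *\<^sub>R e - x))^2 = (norm (q - x))^2 + 2 * (\<sigma> - a) * c + (\<sigma> - a)^2"
      unfolding eq c_def by (rule norm_add_scaleR_unit_power2[OF e])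
    have "rate (q + (\<sigma> - a) *\<^sub>R e) \<le> K * ((norm (q + (\<sigma> - a) *\<^sub>R e - x))^2 - \<delta>^2)"
      unfolding K_def by (rule rate_le)
    also have "\<dots> = p \<sigma>" unfolding n p_def k0_def by (simp add: algebra_simps)
    finally show ?thesis .
  qed
  moreover have pint: "(p has_integral (G (a + l) - G a)) {a..a + l}"
  proof (rule fundamental_theorem_of_calculus)
    fix \<sigma>
    have "(G has_real_derivative p \<sigma>) (at \<sigma> within {a..a + l})"
      unfolding G_def p_def
      by (auto intro!: derivative_eq_intros simp: power2_eq_square algebra_simps) (simp add: field_simps)
    then show "(G has_vector_derivative p \<sigma>) (at \<sigma> within {a..a + l})"
      by (simp add: has_real_derivative_iff_has_vector_derivative)
  qed (use \<open>0 \<le> l\<close> in simp)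
  moreover have "(\<lambda>\<sigma>. rate (q + (\<sigma> - a) *\<^sub>R e)) integrable_on {a..a + l}"
    by (intro integrable_continuous_real continuous_on_rate continuous_intros)
  ultimately have "integral {a..a + l} (\<lambda>\<sigma>. rate (q + (\<sigma> - a) *\<^sub>R e)) \<le> integral {a..a + l} p"
    by (metis integral_le has_integral_integrable)
  also have "\<dots> = G (a + l) - G a" by (rule integral_unique[OF pint])
  also have "\<dots> = K * (k0 * l + c * l^2 + l^3 / 3)" unfolding G_def by simp
  finally show ?thesis by (simp only: K_def k0_def c_def)
qed

lemma line_uncertainty_solution:
  fixes q e :: "real^2" and a g R0 :: real
  defines "L \<equiv> \<lambda>\<sigma>. q + (\<sigma> - a) *\<^sub>R e"
  assumes "a \<le> g"
    and zero: "R0 + integral {a..g} (\<lambda>\<sigma>. rate (L \<sigma>)) = 0"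
    and pos: "\<forall>\<tau>\<in>{a..<g}. 0 < R0 + integral {a..\<tau>} (\<lambda>\<sigma>. rate (L \<sigma>))"
    and inside: "norm (L g - x) \<le> \<delta>"
  obtains \<rho> where "\<rho> g = 0" "\<forall>\<tau>\<ge>a. 0 \<le> \<rho> \<tau>"
    "\<forall>\<tau>\<ge>a. ((\<lambda>\<sigma>. f_R A B r x (\<rho> \<sigma>) (L \<sigma>)) has_integral (\<rho> \<tau> - R0)) {a..\<tau>}"
proof -
  define \<phi> where "\<phi> = (\<lambda>\<sigma>. rate (L \<sigma>))"
  define h where "h = (\<lambda>\<sigma>. if \<sigma> \<le> g then \<phi> \<sigma> else max 0 (\<phi> \<sigma>))"
  define \<rho> where "\<rho> = (\<lambda>\<tau>. if \<tau> \<le> g then R0 + integral {a..\<tau>} \<phi>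
    else integral {g..\<tau>} (\<lambda>\<sigma>. max 0 (\<phi> \<sigma>)))"
  have cont: "continuous_on {c..d} \<phi>" "continuous_on {c..d} (\<lambda>\<sigma>. max 0 (\<phi> \<sigma>))" for c d
    unfolding \<phi>_def L_def by (intro continuous_on_rate continuous_intros)+
  have \<phi>_int: "(\<phi> has_integral integral {c..d} \<phi>) {c..d}"
    and max_int: "((\<lambda>\<sigma>. max 0 (\<phi> \<sigma>)) has_integral integral {c..d} (\<lambda>\<sigma>. max 0 (\<phi> \<sigma>))) {c..d}" for c d
    using cont[of c d] by (simp_all add: integrable_continuous_real integrable_integral)
  have \<rho>g: "\<rho> g = 0" using zero unfolding \<rho>_def \<phi>_def by simp
  have h_int: "(h has_integral (\<rho> \<tau> - R0)) {a..\<tau>}" if "a \<le> \<tau>" for \<tau>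
  proof (cases "\<tau> \<le> g")
    case True
    then have "\<rho> \<tau> - R0 = integral {a..\<tau>} \<phi>" unfolding \<rho>_def by simp
    then show ?thesis unfolding h_def by (rule ssubst, intro has_integral_eq[OF _ \<phi>_int]) (use True in auto)
  next
    case False
    have "integral {a..g} \<phi> = - R0" using zero unfolding \<phi>_def by linarith
    then have "(\<phi> has_integral - R0) {a..g}" using \<phi>_int[of a g] by simp
    from has_integral_splice[OF this max_int \<open>a \<le> g\<close>] False
    show ?thesis unfolding \<rho>_def h_def by simp
  qed
  have \<rho>_nonneg: "0 \<le> \<rho> \<tau>" if "a \<le> \<tau>" for \<tau>
  proof (cases "\<tau> < g")
    case True
    then show ?thesis using pos[rule_format, of \<tau>] that unfolding \<rho>_def \<phi>_def by simp
  next
    case False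
    then show ?thesis using \<rho>g integral_nonneg[OF has_integral_integrable[OF max_int]]
      unfolding \<rho>_def by auto
  qed
  have "f_R A B r x (\<rho> \<sigma>) (L \<sigma>) = h \<sigma>" if "a < \<sigma>" "\<sigma> \<noteq> g" for \<sigma>
  proof (cases "\<sigma> < g")
    case True
    then have "0 < \<rho> \<sigma>" using pos that unfolding \<rho>_def \<phi>_def by simp
    then show ?thesis using True unfolding h_def \<phi>_def by (simp add: f_R_eq_uncertainty_rate)
  next
    case False
    show ?thesis
    proof (cases "0 \<le> \<phi> \<sigma>")
      case True
      then show ?thesis using False unfolding h_def \<phi>_def by (auto simp: f_R_eq_uncertainty_rate)
    next
      case neg: False
      \<comment> \<open>By convexity of the disc the rate is nonpositive on all of [g, \<sigma>],
        so no uncertainty has accumulated since g.\<close>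
      then have "norm (L \<sigma> - x) \<le> \<delta>" using rate_nonneg[of "L \<sigma>"] unfolding \<phi>_def by force
      then have "\<phi> \<tau> \<le> 0" if "\<tau> \<in> {g..\<sigma>}" for \<tau>
        using affine_line_in_cball_between[of g \<tau> \<sigma> q a e x \<delta>] that inside
        unfolding \<phi>_def L_def by (auto intro: rate_nonpos)
      then have "\<rho> \<sigma> = 0"
        using False that integral_cong[of "{g..\<sigma>}" "\<lambda>\<tau>. max 0 (\<phi> \<tau>)" "\<lambda>_. 0"]
        unfolding \<rho>_def by simp
      then show ?thesis using False neg that unfolding h_def \<phi>_def by (simp add: f_R_eq_uncertainty_rate)
    qed
  qed
  then have "((\<lambda>\<sigma>. f_R A B r x (\<rho> \<sigma>) (L \<sigma>)) has_integral (\<rho> \<tau> - R0)) {a..\<tau>}" if "a \<le> \<tau>" for \<tau>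
    by (intro has_integral_spike_finite[of "{a, g}", OF _ _ h_int[OF that]]) auto
  with \<rho>g \<rho>_nonneg show ?thesis using that by blast
qed

end

locale drain_trajectory = drain_target +
  fixes sphi spsi :: "real^2" and Rc T :: real and u s :: "real \<Rightarrow> real^2" and R :: "real \<Rightarrow> real"
  assumes feasible: "draining_feasible A B r x sphi spsi Rc T u s R"
begin

abbreviation R_rate where "R_rate \<equiv> \<lambda>t. f_R A B r x (R t) (s t)"

lemma T_nonneg: "0 \<le> T" and u_integrable: "u integrable_on {0..T}"
  and norm_u_power2_le: "\<forall>t\<in>{0..T}. (norm (u t))^2 \<le> 1"
  and s_eq: "\<forall>t\<in>{0..T}. s t = sphi + integral {0..t} u"
  and R_rate_integrable: "R_rate integrable_on {0..T}"
  and R_eq: "\<forall>t\<in>{0..T}. R t = Rc + integral {0..t} R_rate"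
  and INF_R: "(INF \<tau>\<in>{0..T}. R \<tau>) = 0" and s_T: "s T = spsi" and R_0: "R 0 = Rc"
  using feasible unfolding draining_feasible_def by blast+

lemma norm_u_le_1: "t \<in> {0..T} \<Longrightarrow> norm (u t) \<le> 1"
  using norm_u_power2_le by (simp add: abs_square_le_1)

lemma s_has_integral: "t \<in> {0..T} \<Longrightarrow> (u has_integral (s t - sphi)) {0..t}"
  using s_eq integrable_subinterval_real[OF u_integrable, of 0 t] by (simp add: has_integral_integral)

lemma R_has_integral: "t \<in> {0..T} \<Longrightarrow> (R_rate has_integral (R t - Rc)) {0..t}"
  using R_eq integrable_subinterval_real[OF R_rate_integrable, of 0 t] by (simp add: has_integral_integral)

lemma s_diff:
  assumes "0 \<le> a" "a \<le> b" "b \<le> T"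
  shows "s b - s a = integral {a..b} u"
  using Henstock_Kurzweil_Integration.integral_combine[of 0 a b u]
    integrable_subinterval_real[OF u_integrable, of 0 b] s_eq assms by (simp add: algebra_simps)

lemma R_diff:
  assumes "0 \<le> a" "a \<le> b" "b \<le> T"
  shows "R b - R a = integral {a..b} R_rate"
  using Henstock_Kurzweil_Integration.integral_combine[of 0 a b R_rate]
    integrable_subinterval_real[OF R_rate_integrable, of 0 b] R_eq assms by (simp add: algebra_simps)

lemma s_lipschitz:
  assumes "0 \<le> a" "a \<le> b" "b \<le> T"
  shows "norm (s b - s a) \<le> b - a"
proof -
  have "norm (integral {a..b} u) \<le> integral {a..b} (\<lambda>_. 1::real)"
    using integrable_subinterval_real[OF u_integrable] norm_u_le_1 assms
    by (intro integral_norm_bound_integral) auto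
  then show ?thesis using s_diff[OF assms] assms by simp
qed

lemma continuous_on_s: "continuous_on {0..T} s"
proof -
  have "continuous_on {0..T} (\<lambda>t. sphi + integral {0..t} u)"
    by (intro continuous_intros indefinite_integral_continuous_1 u_integrable)
  then show ?thesis by (rule continuous_on_eq) (use s_eq in auto)
qed

lemma continuous_on_R: "continuous_on {0..T} R"
proof -
  have "continuous_on {0..T} (\<lambda>t. Rc + integral {0..t} R_rate)"
    by (intro continuous_intros indefinite_integral_continuous_1 R_rate_integrable)
  then show ?thesis by (rule continuous_on_eq) (use R_eq in auto)
qed

lemma R_nonneg: "t \<in> {0..T} \<Longrightarrow> 0 \<le> R t"
  using compact_continuous_image[OF continuous_on_R] INF_R
  by (metis bounded_imp_bdd_below cINF_lower compact_Icc compact_imp_bounded)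

lemma R_has_zero: "\<exists>t\<in>{0..T}. R t = 0"
proof -
  obtain t where "t \<in> {0..T}" "\<forall>y\<in>{0..T}. R t \<le> R y"
    using continuous_attains_inf[OF compact_Icc _ continuous_on_R] T_nonneg by auto
  then show ?thesis using R_nonneg[of t] INF_R cINF_greatest[of "{0..T}" "R t" R] by force
qed

lemma R_mono_outside:
  assumes "0 \<le> a" "a \<le> b" "b \<le> T" "\<forall>\<sigma>\<in>{a..b}. \<delta> \<le> norm (s \<sigma> - x)"
  shows "R a \<le> R b"
  using R_diff[of a b] integrable_subinterval_real[OF R_rate_integrable, of a b] assms
    integral_nonneg[of R_rate "{a..b}"] f_R_nonneg by fastforce

lemma R_antimono_inside:
  assumes "0 \<le> a" "a \<le> b" "b \<le> T" "\<forall>\<sigma>\<in>{a..b}. norm (s \<sigma> - x) \<le> \<delta>"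
  shows "R b \<le> R a"
proof -
  have "integral {a..b} R_rate \<le> integral {a..b} (\<lambda>_. 0::real)"
    using integrable_subinterval_real[OF R_rate_integrable, of a b] assms f_R_nonpos
    by (intro integral_le) auto
  then show ?thesis using R_diff[of a b] assms by simp
qed

lemma straight_tail:
  assumes a: "a \<in> {0..T}" and T: "T \<le> a + norm (spsi - s a)"
  shows "\<forall>t\<in>{a..T}. s t = s a + (t - a) *\<^sub>R sgn (spsi - s a)"
proof
  fix t assume t: "t \<in> {a..T}"
  show "s t = s a + (t - a) *\<^sub>R sgn (spsi - s a)"
  proof (cases "spsi = s a")
    case True
    then have "t = a" using t T by simp
    then show ?thesis by simp
  next
    case False
    show ?thesis
    proof (rule eq_along_unit_if_dist_sum_le)
      show "norm (sgn (spsi - s a)) = 1" using False by (simp add: norm_sgn)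
      show "norm (s t - s a) \<le> t - a" using s_lipschitz t a by simp
      have "s a + norm (spsi - s a) *\<^sub>R sgn (spsi - s a) = spsi" using False by (simp add: sgn_div_norm)
      then show "norm (s a + norm (spsi - s a) *\<^sub>R sgn (spsi - s a) - s t) \<le> T - t"
        using s_lipschitz[of t T] t a s_T by simp
      show "t - a + (T - t) \<le> norm (spsi - s a)" using T by simp
    qed
  qed
qed

lemma straight_tail_control:
  assumes a: "a \<in> {0..T}" and T: "T \<le> a + norm (spsi - s a)" and "s a \<noteq> spsi"
  shows "AE t in lebesgue. t \<in> {a..T} \<longrightarrow> u t = sgn (spsi - s a)"
proof (rule AE_eq_unit_if_integral_eq)
  have "norm (spsi - s a) \<le> T - a" using s_lipschitz[of a T] a s_T by simp
  then have "norm (spsi - s a) = T - a" "T - a \<noteq> 0" using T assms(3) by auto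
  then show "integral {a..T} u = (T - a) *\<^sub>R sgn (spsi - s a)"
    using s_diff[of a T] a s_T by (simp add: sgn_div_norm)
  show "norm (sgn (spsi - s a)) = 1" using assms by (simp add: norm_sgn)
qed (use a integrable_subinterval_real[OF u_integrable, of a T] norm_u_le_1 in auto)

end

locale optimal_drain = drain_trajectory +
  assumes optimal: "\<forall>T' u' s' R'. draining_feasible A B r x sphi spsi Rc T' u' s' R' \<longrightarrow> T \<le> T'"
    and spsi_on_circle: "norm (spsi - x) = r" and Rc_pos: "0 < Rc"
begin

text \<open>The competitor follows the optimal trajectory up to time a and then heads straight for
  spsi at unit speed; it is feasible as soon as the uncertainty vanishes on the way.\<close>

lemma optimal_time_le_line:
  fixes a g :: real
  defines "e \<equiv> sgn (spsi - s a)"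
  assumes a: "a \<in> {0..T}" and g: "a \<le> g" "g \<le> a + norm (spsi - s a)"
    and zero: "R a + integral {a..g} (\<lambda>\<sigma>. rate (s a + (\<sigma> - a) *\<^sub>R e)) = 0"
    and pos: "\<forall>\<tau>\<in>{a..<g}. 0 < R a + integral {a..\<tau>} (\<lambda>\<sigma>. rate (s a + (\<sigma> - a) *\<^sub>R e))"
    and inside: "norm (s a + (g - a) *\<^sub>R e - x) \<le> \<delta>"
  shows "T \<le> a + norm (spsi - s a)"
proof -
  obtain \<rho> where \<rho>: "\<rho> g = 0" "\<forall>\<tau>\<ge>a. 0 \<le> \<rho> \<tau>"
      "\<forall>\<tau>\<ge>a. ((\<lambda>\<sigma>. f_R A B r x (\<rho> \<sigma>) (s a + (\<sigma> - a) *\<^sub>R e)) has_integral (\<rho> \<tau> - R a)) {a..\<tau>}"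
    using line_uncertainty_solution[OF g(1) zero pos inside] by blast
  define T' where "T' = a + norm (spsi - s a)"
  define u' where "u' = (\<lambda>\<tau>. if \<tau> \<le> a then u \<tau> else e)"
  define s' where "s' = (\<lambda>\<tau>. if \<tau> \<le> a then s \<tau> else s a + (\<tau> - a) *\<^sub>R e)"
  define R' where "R' = (\<lambda>\<tau>. if \<tau> \<le> a then R \<tau> else \<rho> \<tau>)"
  have "draining_feasible A B r x sphi spsi Rc T' u' s' R'"
  proof (rule draining_feasibleI)
    show "0 \<le> T'" using a unfolding T'_def by simp
    show "\<forall>t\<in>{0..T'}. (norm (u' t))^2 \<le> 1"
    proof
      fix t assume t: "t \<in> {0..T'}"
      have "norm e \<le> 1" unfolding e_def by (simp add: norm_sgn)
      then have "norm (u' t) \<le> 1" using norm_u_le_1[of t] t a unfolding u'_def by auto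
      then show "(norm (u' t))^2 \<le> 1" by (simp add: abs_square_le_1)
    qed
    have "((\<lambda>_. e) has_integral (s a + (\<tau> - a) *\<^sub>R e - s a)) {a..\<tau>}" if "a \<le> \<tau>" for \<tau>
      using has_integral_const_real[of e a \<tau>] that by simp
    then show "\<forall>t\<in>{0..T'}. (u' has_integral (s' t - sphi)) {0..t}"
      using has_integral_if_splice[where f = u and F = s and c = sphi and g = "\<lambda>_. e"
          and G = "\<lambda>\<tau>. s a + (\<tau> - a) *\<^sub>R e"] s_has_integral a
      unfolding u'_def s'_def by auto
    have "f_R A B r x (R' \<tau>) (s' \<tau>) =
        (if \<tau> \<le> a then R_rate \<tau> else f_R A B r x (\<rho> \<tau>) (s a + (\<tau> - a) *\<^sub>R e))" for \<tau>
      unfolding R'_def s'_def by simp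
    then show "\<forall>t\<in>{0..T'}. ((\<lambda>\<tau>. f_R A B r x (R' \<tau>) (s' \<tau>)) has_integral (R' t - Rc)) {0..t}"
      using has_integral_if_splice[where f = R_rate and F = R and c = Rc and G = \<rho>
          and g = "\<lambda>\<sigma>. f_R A B r x (\<rho> \<sigma>) (s a + (\<sigma> - a) *\<^sub>R e)"] R_has_integral \<rho>(3) a
      unfolding R'_def by auto
    show "\<forall>t\<in>{0..T'}. 0 \<le> R' t" using R_nonneg \<rho>(2) a unfolding R'_def by auto
    have "R' g = 0" using \<rho>(1) zero g unfolding R'_def by (cases "g = a") auto
    then show "\<exists>t\<in>{0..T'}. R' t = 0" using a g unfolding T'_def by auto
    show "s' T' = spsi"
      using s_T a unfolding s'_def T'_def e_def by (auto simp: sgn_div_norm)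
  qed
  then show ?thesis using optimal unfolding T'_def by blast
qed

lemma optimal_time_le_if_line_drains:
  fixes a l :: real
  defines "e \<equiv> sgn (spsi - s a)"
  assumes a: "a \<in> {0..T}" "0 < R a" and l: "0 \<le> l" "l \<le> norm (spsi - s a)"
    and drained: "R a + integral {a..a + l} (\<lambda>\<sigma>. rate (s a + (\<sigma> - a) *\<^sub>R e)) \<le> 0"
  shows "T \<le> a + norm (spsi - s a)"
proof -
  define \<phi> where "\<phi> = (\<lambda>\<sigma>. rate (s a + (\<sigma> - a) *\<^sub>R e))"
  define F where "F = (\<lambda>\<tau>. R a + integral {a..\<tau>} \<phi>)"
  have \<phi>_int: "\<phi> integrable_on {c..d}" for c d
    unfolding \<phi>_def by (intro integrable_continuous_real continuous_on_rate continuous_intros)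
  have "continuous_on {a..a + norm (spsi - s a)} F"
    unfolding F_def by (intro continuous_intros indefinite_integral_continuous_1 \<phi>_int)
  moreover have "0 < F a" "a + l \<in> {a..a + norm (spsi - s a)}" "F (a + l) \<le> 0"
    using a(2) l drained unfolding F_def \<phi>_def by auto
  ultimately obtain g where g: "a < g" "g \<le> a + norm (spsi - s a)" "F g = 0" "\<forall>\<tau>\<in>{a..<g}. 0 < F \<tau>"
    by (rule continuous_on_first_zero)
  have "norm (s a + (g - a) *\<^sub>R e - x) \<le> \<delta>"
  proof (rule endpoint_in_cball_if_integrals_neg[OF \<open>a < g\<close> _ \<phi>_int])
    show "continuous_on {a..g} (\<lambda>\<sigma>. s a + (\<sigma> - a) *\<^sub>R e)" by (intro continuous_intros)
    show "\<forall>t\<in>{a..<g}. integral {t..g} \<phi> < 0"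
    proof
      fix t assume t: "t \<in> {a..<g}"
      have "integral {a..t} \<phi> + integral {t..g} \<phi> = integral {a..g} \<phi>"
        using t by (intro Henstock_Kurzweil_Integration.integral_combine \<phi>_int) auto
      then show "integral {t..g} \<phi> < 0" using g(3) g(4)[rule_format, OF t] unfolding F_def by linarith
    qed
    show "\<forall>t\<in>{a..g}. \<delta> \<le> norm (s a + (t - a) *\<^sub>R e - x) \<longrightarrow> 0 \<le> \<phi> t"
      unfolding \<phi>_def using rate_nonneg by blast
  qed
  with g show ?thesis
    unfolding F_def \<phi>_def e_def by (intro optimal_time_le_line[OF a(1)]) auto
qed

lemma first_zero_of_R:
  obtains t1 where "0 < t1" "t1 \<le> T" "R t1 = 0" "\<forall>\<tau>\<in>{0..<t1}. 0 < R \<tau>" "norm (s t1 - x) \<le> \<delta>"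
proof -
  obtain t0 where t0: "t0 \<in> {0..T}" "R t0 = 0" using R_has_zero by blast
  have "0 < R 0" using R_0 Rc_pos by simp
  from continuous_on_first_zero[OF continuous_on_R this t0(1)] t0(2)
  obtain t1 where t1: "0 < t1" "t1 \<le> T" "R t1 = 0" "\<forall>\<tau>\<in>{0..<t1}. 0 < R \<tau>" by auto
  have "norm (s t1 - x) \<le> \<delta>"
  proof (rule endpoint_in_cball_if_integrals_neg[OF \<open>0 < t1\<close>])
    show "continuous_on {0..t1} s" using continuous_on_subset[OF continuous_on_s] t1 by simp
    show "R_rate integrable_on {0..t1}" using integrable_subinterval_real[OF R_rate_integrable] t1 by simp
    show "\<forall>t\<in>{0..<t1}. integral {t..t1} R_rate < 0"
    proof
      fix t assume t: "t \<in> {0..<t1}"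
      then have "integral {t..t1} R_rate = R t1 - R t" using R_diff[of t t1] t1 by simp
      then show "integral {t..t1} R_rate < 0" using t t1 by simp
    qed
    show "\<forall>t\<in>{0..t1}. \<delta> \<le> norm (s t - x) \<longrightarrow> 0 \<le> R_rate t" using f_R_nonneg by blast
  qed
  with t1 that show ?thesis by blast
qed

lemma optimal_time_le_at_first_zero:
  assumes "0 < t1" "t1 \<le> T" "R t1 = 0" "norm (s t1 - x) \<le> \<delta>"
  shows "T \<le> t1 + norm (spsi - s t1)"
  using assms by (intro optimal_time_le_line[of t1 t1]) auto

text \<open>If the agent reached the disc at the first zero t1 heading inward, leaving slightly before
  t1 along the chord to spsi drains the target before the chord's closest approach to x: E a
  bounds, via integral_rate_line_le, the uncertainty left there, and E t1 < 0.\<close>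

lemma corner_cut:
  assumes t1: "0 < t1" "t1 \<le> T" "R t1 = 0" "\<forall>\<tau>\<in>{0..<t1}. 0 < R \<tau>"
    and on_circle: "norm (s t1 - x) = \<delta>"
    and inward: "inner (s t1 - x) (sgn (spsi - s t1)) < 0"
  obtains a where "0 \<le> a" "a < t1" "T \<le> a + norm (spsi - s a)"
proof -
  define c where "c = (\<lambda>a. inner (s a - x) (sgn (spsi - s a)))"
  define E where "E = (\<lambda>a. R a + B / r^2 *
    (((norm (s a - x))^2 - \<delta>^2) * (- c a) + c a * (- c a)^2 + (- c a)^3 / 3))"
  define b where "b = max 0 (t1 - (r - \<delta>) / 2)"
  have b: "0 \<le> b" "b < t1" using t1 drain_radius_less unfolding b_def by auto
  have near: "norm (s a - x) < r" if "a \<in> {b..t1}" for a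
  proof -
    have "norm (s t1 - s a) \<le> t1 - a" using s_lipschitz[of a t1] that b t1 by simp
    moreover have "norm (s a - x) \<le> norm (s t1 - x) + norm (s t1 - s a)"
      using norm_triangle_ineq[of "s t1 - x" "s a - s t1"] by (simp add: norm_minus_commute)
    moreover have "t1 - (r - \<delta>) / 2 \<le> a" using that unfolding b_def by simp
    ultimately show ?thesis using on_circle drain_radius_less by argo
  qed
  have cs: "continuous_on {b..t1} s" "continuous_on {b..t1} R"
    using continuous_on_subset[OF continuous_on_s] continuous_on_subset[OF continuous_on_R] b t1
    by auto
  have "spsi - s a \<noteq> 0" if "a \<in> {b..t1}" for a using near[OF that] spsi_on_circle by auto
  then have "continuous_on {b..t1} (\<lambda>a. max (E a) (c a))"
    unfolding E_def c_def by (intro continuous_intros cs) auto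
  moreover have "max (E t1) (c t1) < 0"
  proof -
    have "E t1 = B / r^2 * (2 / 3 * (c t1)^3)"
      unfolding E_def using t1(3) on_circle by (simp add: power2_eq_square power3_eq_cube)
    moreover have "2 / 3 * (c t1)^3 < 0" using inward unfolding c_def by (simp add: power_less_zero_eq)
    moreover have "0 < B / r^2" using A_pos A_less_B r_pos by simp
    ultimately have "E t1 < 0" by (simp only: mult_pos_neg)
    then show ?thesis using inward unfolding c_def by simp
  qed
  ultimately obtain a where a: "b \<le> a" "a < t1" "max (E a) (c a) < 0"
    using continuous_on_neg_before[OF _ b(2)] by blast
  define e where "e = sgn (spsi - s a)"
  have a_near: "norm (s a - x) < r" using near a by simp
  then have e: "norm e = 1" using spsi_on_circle unfolding e_def by (auto simp: norm_sgn)
  have c_a: "c a = inner (s a - x) e" unfolding c_def e_def ..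
  have "- c a \<le> norm (spsi - s a)"
    unfolding c_def using neg_inner_sgn_le_norm_diff[of "s a" x spsi] a_near spsi_on_circle by simp
  moreover have "integral {a..a + - c a} (\<lambda>\<sigma>. rate (s a + (\<sigma> - a) *\<^sub>R e))
      \<le> B / r^2 * (((norm (s a - x))^2 - \<delta>^2) * (- c a) + c a * (- c a)^2 + (- c a)^3 / 3)"
    using integral_rate_line_le[OF e, of "- c a" a "s a"] a(3) unfolding c_a[symmetric] by simp
  then have "R a + integral {a..a + - c a} (\<lambda>\<sigma>. rate (s a + (\<sigma> - a) *\<^sub>R e)) \<le> 0"
    using a(3) unfolding E_def by simp
  moreover have "a \<in> {0..T}" "0 < R a" "0 \<le> - c a" using a b t1 by auto
  ultimately have "T \<le> a + norm (spsi - s a)"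
    unfolding e_def by (intro optimal_time_le_if_line_drains) auto
  with a b show ?thesis by (intro that) auto
qed

lemma exits_disc_outward:
  assumes t1: "0 < t1" "t1 \<le> T" "R t1 = 0" "\<forall>\<tau>\<in>{0..<t1}. 0 < R \<tau>"
    and on_circle: "norm (s t1 - x) = \<delta>"
  shows "0 \<le> inner (s t1 - x) (sgn (spsi - s t1))"
proof (rule ccontr)
  assume "\<not> ?thesis"
  then have inward_t1: "inner (s t1 - x) (sgn (spsi - s t1)) < 0" by simp
  then obtain a where a: "0 \<le> a" "a < t1" "T \<le> a + norm (spsi - s a)"
    by (rule corner_cut[OF t1 on_circle])
  define e where "e = sgn (spsi - s a)"
  have "\<forall>t\<in>{a..T}. s t = s a + (t - a) *\<^sub>R e"
    unfolding e_def using a t1 by (intro straight_tail) auto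
  then have line: "s t = s a + (t - a) *\<^sub>R e" if "t \<in> {a..T}" for t using that by blast
  have "spsi \<noteq> s t1" using on_circle spsi_on_circle drain_radius_less by auto
  have "spsi \<noteq> s a" using a t1 by auto
  then have "norm e = 1" unfolding e_def by (simp add: norm_sgn)
  have "spsi - s t1 = (T - t1) *\<^sub>R e"
    using line[of t1] line[of T] s_T a t1 by (simp add: scaleR_diff_left)
  moreover have "T \<noteq> t1" using calculation \<open>spsi \<noteq> s t1\<close> by auto
  ultimately have "sgn (spsi - s t1) = e" using t1 \<open>norm e = 1\<close> by (simp add: sgn_scaleR sgn_div_norm)
  then have inward: "inner (s t1 - x) e < 0" using inward_t1 by simp
  have "\<delta> \<le> norm (s \<sigma> - x)" if "\<sigma> \<in> {a..t1}" for \<sigma>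
  proof -
    have eq: "s \<sigma> - x = (s t1 - x) + (- (t1 - \<sigma>)) *\<^sub>R e"
      using line[of \<sigma>] line[of t1] that t1 by (simp add: scaleR_diff_left)
    have "(norm (s \<sigma> - x))^2 = \<delta>^2 + 2 * (- (t1 - \<sigma>)) * inner (s t1 - x) e + (- (t1 - \<sigma>))^2"
      by (simp only: eq norm_add_scaleR_unit_power2[OF \<open>norm e = 1\<close>] on_circle)
    moreover have "0 \<le> 2 * (- (t1 - \<sigma>)) * inner (s t1 - x) e"
      using inward that by (intro mult_nonpos_nonpos) auto
    ultimately have "\<delta>^2 \<le> (norm (s \<sigma> - x))^2" using zero_le_power2[of "- (t1 - \<sigma>)"] by linarith
    then show ?thesis by (rule power2_le_imp_le) simp
  qed
  then have "R a \<le> R t1" using R_mono_outside[of a t1] a t1 by simp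
  moreover have "0 < R a" using t1(4) a by simp
  ultimately show False using t1(3) by simp
qed

lemma first_zero_straight_tail:
  obtains t1 e where "0 < t1" "t1 \<le> T" "R t1 = 0" "\<forall>\<tau>\<in>{0..<t1}. 0 < R \<tau>" "norm (s t1 - x) \<le> \<delta>"
    "sgn (spsi - s t1) = e" "norm e = 1" "\<forall>t\<in>{t1..T}. s t = s t1 + (t - t1) *\<^sub>R e"
proof -
  obtain t1 where t1: "0 < t1" "t1 \<le> T" "R t1 = 0" "\<forall>\<tau>\<in>{0..<t1}. 0 < R \<tau>" "norm (s t1 - x) \<le> \<delta>"
    by (rule first_zero_of_R)
  moreover have "spsi \<noteq> s t1" using t1(5) spsi_on_circle drain_radius_less by auto
  then have "norm (sgn (spsi - s t1)) = 1" by (simp add: norm_sgn)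
  moreover have "\<forall>t\<in>{t1..T}. s t = s t1 + (t - t1) *\<^sub>R sgn (spsi - s t1)"
    using t1 by (intro straight_tail optimal_time_le_at_first_zero) auto
  ultimately show ?thesis using that by blast
qed

lemma drain_contact_exists_unique: "\<exists>!t0. t0 \<in> {0..T} \<and> norm (s t0 - x) = \<delta> \<and> R t0 = 0"
proof -
  obtain t1 e where t1: "0 < t1" "t1 \<le> T" "R t1 = 0" "\<forall>\<tau>\<in>{0..<t1}. 0 < R \<tau>" "norm (s t1 - x) \<le> \<delta>"
    and e: "sgn (spsi - s t1) = e" "norm e = 1" and line: "\<forall>t\<in>{t1..T}. s t = s t1 + (t - t1) *\<^sub>R e"
    by (rule first_zero_straight_tail)
  define c where "c = inner (s t1 - x) e"
  define D where "D = \<delta>^2 - (norm (s t1 - x))^2"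
  have after: "t1 \<le> t" if "t \<in> {0..T}" "R t = 0" for t
    using t1(4) that by force
  have root: "(t - t1)^2 + 2 * c * (t - t1) = D" if "t \<in> {t1..T}" "norm (s t - x) = \<delta>" for t
  proof -
    have "s t - x = (s t1 - x) + (t - t1) *\<^sub>R e" using line[rule_format, OF that(1)] by simp
    then have "(norm (s t - x))^2 = (norm (s t1 - x))^2 + 2 * (t - t1) * c + (t - t1)^2"
      unfolding c_def by (simp only: norm_add_scaleR_unit_power2[OF e(2)])
    then show ?thesis using that(2) unfolding D_def by simp
  qed
  have "continuous_on {t1..T} (\<lambda>t. norm (s t - x))"
    using continuous_on_subset[OF continuous_on_s] t1 by (intro continuous_intros) auto
  moreover have "\<delta> \<le> norm (s T - x)" using s_T spsi_on_circle drain_radius_less by simp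
  ultimately obtain t0 where t0: "t1 \<le> t0" "t0 \<le> T" "norm (s t0 - x) = \<delta>"
    using IVT'[of "\<lambda>t. norm (s t - x)" t1 \<delta> T] t1 by auto
  have "s t0 = s t1 + (t0 - t1) *\<^sub>R e" using line[rule_format, of t0] t0 by simp
  then have "norm (s \<sigma> - x) \<le> \<delta>" if "\<sigma> \<in> {t1..t0}" for \<sigma>
    using affine_line_in_cball_between[of t1 \<sigma> t0 "s t1" t1 e x \<delta>] line[rule_format, of \<sigma>]
      that t0 t1(5) by simp
  then have "R t0 = 0" using R_antimono_inside[of t1 t0] R_nonneg[of t0] t1 t0 by auto
  moreover have "t = t0" if "t \<in> {0..T}" "norm (s t - x) = \<delta>" "R t = 0" for t
  proof (rule quadratic_nonneg_roots_eq[of "t - t1" "t0 - t1" c D, simplified])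
    show "t1 \<le> t" "t1 \<le> t0" using after that t0 by auto
    show "(t - t1)^2 + 2 * c * (t - t1) = D" "(t0 - t1)^2 + 2 * c * (t0 - t1) = D"
      using root that t0 after by auto
    show "0 \<le> D" using t1(5) unfolding D_def by (simp add: power_mono)
    show "0 \<le> c" if "D = 0"
    proof -
      have "norm (s t1 - x) = \<delta>"
        using that drain_radius_pos unfolding D_def by (simp add: power2_eq_iff_nonneg)
      then show ?thesis using exits_disc_outward[OF t1(1-4)] e(1) unfolding c_def by simp
    qed
  qed
  ultimately show ?thesis using t0 t1 by (intro ex1I[of _ t0]) auto
qed

lemma control_after_drain_contact:
  assumes t0: "t0 \<in> {0..T}" "norm (s t0 - x) = \<delta>" "R t0 = 0"
  shows "AE t in lebesgue. t \<in> {t0..T} \<longrightarrow> u t = sgn (spsi - s t0)"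
proof (rule straight_tail_control)
  obtain t1 e where t1: "t1 \<le> T" "\<forall>\<tau>\<in>{0..<t1}. 0 < R \<tau>"
    and e: "norm e = 1" and line: "\<forall>t\<in>{t1..T}. s t = s t1 + (t - t1) *\<^sub>R e"
    by (rule first_zero_straight_tail)
  have "t1 \<le> t0" using t1(2) t0 by force
  then have "s t0 = s t1 + (t0 - t1) *\<^sub>R e" "spsi = s t1 + (T - t1) *\<^sub>R e"
    using line[rule_format, of t0] line[rule_format, of T] t0 t1 s_T by auto
  then have "spsi - s t0 = (T - t0) *\<^sub>R e" by (simp add: scaleR_diff_left)
  then show "T \<le> t0 + norm (spsi - s t0)" using e t0 by simp
  show "s t0 \<noteq> spsi" using t0 spsi_on_circle drain_radius_less by auto
qed (use t0 in simp)

end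

theorem theorem1:
  fixes x sphi spsi :: "real^2" and r A B Rc T :: real
    and u s :: "real \<Rightarrow> real^2" and R :: "real \<Rightarrow> real"
  assumes "0 < r" and "0 < A" and "A < B"
    and "norm (sphi - x) = r" and "norm (spsi - x) = r"
    and "0 < Rc"
    and "draining_optimal A B r x sphi spsi Rc T u s R"
  shows "(\<exists>!t0. t0 \<in> {0..T} \<and> norm (s t0 - x) = sqrt (r^2 * (B - A) / B) \<and> R t0 = 0)
    \<and> (\<forall>t0. t0 \<in> {0..T} \<and> norm (s t0 - x) = sqrt (r^2 * (B - A) / B) \<and> R t0 = 0 \<longrightarrow>
           (AE t in lebesgue. t \<in> {t0..T} \<longrightarrow>
              u t = (1 / norm (spsi - s t0)) *\<^sub>R (spsi - s t0)))"
proof -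
  interpret optimal_drain A B r x sphi spsi Rc T u s R
    by unfold_locales (use assms in \<open>auto simp: draining_optimal_def\<close>)
  have "sgn v = (1 / norm v) *\<^sub>R v" for v :: "real^2"
    by (simp add: sgn_div_norm divide_inverse_commute)
  then show ?thesis
    using drain_contact_exists_unique control_after_drain_contact
    unfolding drain_radius_def by auto
qed

end
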